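(* Assume that $\mathsf U_k^n\in\mathcal B(b)$ for every $k\in\mathcal V$. Let $i\in\mathcal V$, $j\in\mathcal I(i)$, and let $\gamma_{ij}\in[1,\min(\gamma_i^n,\gamma_j^n)]$. Define, for $\mathbf u\in\mathcal B(b)$, $$\Psi_{ij}(\mathbf u):=\rho e(\mathbf u)-S_{ij}^{\min}\,\rho^{\gamma_{ij}}(1-b\rho)^{1-\gamma_{ij}},\qquad S_{ij}^{\min}:=\min\big(S(\mathsf U_i^n,\gamma_{ij}),S(\mathsf U_j^n,\gamma_{ij})\big).$$ Consider the extended Riemann problem with left data $(\varrho_i^n,\mathsf M_i^n\cdot\mathbf n_{ij},\mathcal E_i^n,\Gamma_i^n)^{\mathsf T}$ and right data $(\varrho_j^n,\mathsf M_j^n\cdot\mathbf n_{ij},\mathcal E_j^n,\Gamma_j^n)^{\mathsf T}$. Then $\Psi_{ij}$ (evaluated on the states of the Riemann solution) increases across shocks in the solution of this extended Riemann problem, if a shock wave exists, i.e. from the pre-shock state to the post-shock state.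
   Context: Let $d\ge1$ and $b\ge0$. For $\mathbf u=(\rho,\mathbf m,E)\in\mathbb R^{d+2}$ with $\rho>0$ set $e(\mathbf u)=\rho^{-1}E-\tfrac12\|\mathbf m/\rho\|^2$. The admissible set is $\mathcal B(b)=\{\mathbf u=(\rho,\mathbf m,E): \rho>0,\ 1-b\rho>0,\ e(\mathbf u)>0\}$. A pressure "oracle" $p:\mathcal B(b)\to[0,\infty)$ is an arbitrary given function. $\mathcal V$ is a finite index set; for each $i\in\mathcal V$, $\mathcal I(i)\subset\mathcal V$ is a set containing $i$, and vectors $\mathbf c_{ij}\in\mathbb R^d$ (nonzero for $j\ne i$) are given with $\mathbf n_{ij}:=\mathbf c_{ij}/\|\mathbf c_{ij}\|$. States $\mathsf U_k^n=(\varrho_k^n,\mathsf M_k^n,\mathsf E_k^n)$ are given. For $Z\in\{i,j\}$: $\mathsf p_Z^n=p(\mathsf U_Z^n)$, $\mathsf e_Z^n=e(\mathsf U_Z^n)$, $\gamma_Z^n:=1+\frac{\mathsf p_Z^n(1-b\varrho_Z^n)}{\varrho_Z^n\mathsf e_Z^n}$, $\Gamma_Z^n:=\varrho_Z^n\gamma_Z^n$, and $\mathcal E_Z^n:=\mathsf E_Z^n-\frac{\|\mathsf M_Z^n-(\mathsf M_Z^n\cdot\mathbf n_{ij})\mathbf n_{ij}\|^2}{2\varrho_Z^n}$. For $\mathbf u\in\mathcal B(b)$ and $\gamma\ge1$, $S(\mathbf u,\gamma):=\frac{\rho e(\mathbf u)}{\rho^\gamma}(1-b\rho)^{\gamma-1}$.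 The extended Riemann problem is the one-dimensional system in $(x,t)$ $$\partial_t(\rho,m,\mathcal E,\Gamma)^{\mathsf T}+\partial_x\Big(m,\ \tfrac{m^2}{\rho}+p_{\rm cov},\ \tfrac m\rho(\mathcal E+p_{\rm cov}),\ \tfrac m\rho\Gamma\Big)^{\mathsf T}=0,\qquad p_{\rm cov}=\frac{\Gamma/\rho-1}{1-b\rho}\Big(\mathcal E-\frac{m^2}{2\rho}\Big),$$ with the left data for $x<0$ and right data for $x>0$ at $t=0$. A state $(\rho,m,\mathcal E,\Gamma)$ of this problem is identified with a state having density $\rho$ and internal energy density $\rho e=\mathcal E-\frac{m^2}{2\rho}$ when evaluating $\Psi_{ij}$. *)

theory Defs
  imports "HOL-Analysis.Analysis"
begin

definition int_en :: "real \<Rightarrow> 'a::real_normed_vector \<Rightarrow> real \<Rightarrow> real" where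
  "int_en rho m E = E / rho - (norm ((1 / rho) *\<^sub>R m))\<^sup>2 / 2"

definition admissible :: "real \<Rightarrow> real \<Rightarrow> 'a::real_normed_vector \<Rightarrow> real \<Rightarrow> bool" where
  "admissible b rho m E \<longleftrightarrow> rho > 0 \<and> 1 - b * rho > 0 \<and> int_en rho m E > 0"

definition S_fun :: "real \<Rightarrow> real \<Rightarrow> 'a::real_normed_vector \<Rightarrow> real \<Rightarrow> real \<Rightarrow> real" where
  "S_fun b rho m E g = rho * int_en rho m E / rho powr g * (1 - b * rho) powr (g - 1)"

definition Psi :: "real \<Rightarrow> real \<Rightarrow> real \<Rightarrow> real \<Rightarrow> 'a::real_normed_vector \<Rightarrow> real \<Rightarrow> real" where
  "Psi b Smin g rho m E = rho * int_en rho m E - Smin * rho powr g * (1 - b * rho) powr (1 - g)"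

definition gamma_of :: "real \<Rightarrow> real \<Rightarrow> real \<Rightarrow> 'a::real_normed_vector \<Rightarrow> real \<Rightarrow> real" where
  "gamma_of b pr rho m E = 1 + pr * (1 - b * rho) / (rho * int_en rho m E)"

definition unit_dir :: "real^'d \<Rightarrow> real^'d" where
  "unit_dir c = (1 / norm c) *\<^sub>R c"

text \<open>Energy with the tangential kinetic energy removed: E - |M - (M.n)n|^2/(2 rho).\<close>
definition E_normal :: "real^'d \<Rightarrow> real \<Rightarrow> real^'d \<Rightarrow> real \<Rightarrow> real" where
  "E_normal n rho M E = E - (norm (M - (M \<bullet> n) *\<^sub>R n))\<^sup>2 / (2 * rho)"

text \<open>Extended Riemann problem: states (rho, m, calE, Gamma).\<close>
type_synonym ext_state = "real \<times> real \<times> real \<times> real"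

definition p_cov :: "real \<Rightarrow> ext_state \<Rightarrow> real" where
  "p_cov b U = (case U of (rho, m, cE, G) \<Rightarrow>
     (G / rho - 1) / (1 - b * rho) * (cE - m\<^sup>2 / (2 * rho)))"

definition ext_flux :: "real \<Rightarrow> ext_state \<Rightarrow> ext_state" where
  "ext_flux b U = (case U of (rho, m, cE, G) \<Rightarrow>
     (m, m\<^sup>2 / rho + p_cov b U, m / rho * (cE + p_cov b U), m / rho * G))"

definition RH :: "real \<Rightarrow> real \<Rightarrow> ext_state \<Rightarrow> ext_state \<Rightarrow> bool" where
  "RH b s UL UR \<longleftrightarrow>
     (case UL of (r1, m1, e1, g1) \<Rightarrow> case UR of (r2, m2, e2, g2) \<Rightarrow>
      case ext_flux b UL of (f1, f2, f3, f4) \<Rightarrow> case ext_flux b UR of (h1, h2, h3, h4) \<Rightarrow>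
        s * (r2 - r1) = h1 - f1 \<and> s * (m2 - m1) = h2 - f2 \<and>
        s * (e2 - e1) = h3 - f3 \<and> s * (g2 - g1) = h4 - f4)"

text \<open>Velocity and sound speed of the extended system (gamma = Gamma/rho):
  c^2 = gamma p_cov / (rho (1 - b rho)). Eigenvalues v - c, v, v, v + c.\<close>
definition vel :: "ext_state \<Rightarrow> real" where
  "vel U = (case U of (rho, m, cE, G) \<Rightarrow> m / rho)"

definition snd_speed :: "real \<Rightarrow> ext_state \<Rightarrow> real" where
  "snd_speed b U = (case U of (rho, m, cE, G) \<Rightarrow>
     sqrt ((G / rho) * p_cov b U / (rho * (1 - b * rho))))"

definition lam1 :: "real \<Rightarrow> ext_state \<Rightarrow> real" where
  "lam1 b U = vel U - snd_speed b U"

definition lam3 :: "real \<Rightarrow> ext_state \<Rightarrow> real" where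
  "lam3 b U = vel U + snd_speed b U"

definition lax1 :: "real \<Rightarrow> real \<Rightarrow> ext_state \<Rightarrow> ext_state \<Rightarrow> bool" where
  "lax1 b s UL UR \<longleftrightarrow> RH b s UL UR \<and> lam1 b UR < s \<and> s < lam1 b UL \<and> s < vel UR"

definition lax3 :: "real \<Rightarrow> real \<Rightarrow> ext_state \<Rightarrow> ext_state \<Rightarrow> bool" where
  "lax3 b s UL UR \<longleftrightarrow> RH b s UL UR \<and> lam3 b UR < s \<and> s < lam3 b UL \<and> vel UL < s"

definition ext_adm :: "real \<Rightarrow> ext_state \<Rightarrow> bool" where
  "ext_adm b U = (case U of (rho, m, cE, G) \<Rightarrow> admissible b rho m cE)"

definition ext_Psi :: "real \<Rightarrow> real \<Rightarrow> real \<Rightarrow> ext_state \<Rightarrow> real" where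
  "ext_Psi b Smin g U = (case U of (rho, m, cE, G) \<Rightarrow> Psi b Smin g rho m cE)"

end

theory Submission
  imports Defs
begin

text \<open>
  In the frame of a Lax 1-shock the mass flux \<open>j = \<rho> (u - s)\<close> is positive and conserved, so
  the transported ratio \<open>\<gamma> = \<Gamma>/\<rho>\<close> is continuous across the shock and on both sides the
  covolume pressure is that of a single polytropic covolume gas, \<open>p (1 - b \<rho>) = (\<gamma> - 1) \<rho> e\<close>.
  Momentum conservation and Lax's inequalities (supersonic ahead, subsonic behind) force
  compression.  In the covolume \<open>x = 1/\<rho> - b\<close> the Hugoniot relation is the classical
  polytropic one, along which \<open>p x\<^sup>\<gamma>\<close>, i.e. \<open>S(\<cdot>, \<gamma>)\<close>, increases under compression.
  As \<open>S(u, g) = S(u, \<gamma>) x\<^bsup>g - \<gamma>\<^esup>\<close> and \<open>x\<close> decreases, \<open>S(\<cdot>, g)\<close> increases for every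
  \<open>g \<le> \<gamma>\<close>, and then so does
  \<open>\<Psi> = \<rho>\<^sup>g (1 - b \<rho>)\<^bsup>1-g\<^esup> (S(\<cdot>, g) - S\<^sub>m\<^sub>i\<^sub>n)\<close>, whose prefactor increases with \<open>\<rho>\<close>.
  The 3-shock case is the mirror image \<open>m \<mapsto> -m\<close> of the 1-shock case, and projecting onto
  \<open>n\<^sub>i\<^sub>j\<close> leaves the internal energy unchanged.
\<close>

lemma Hugoniot_ratio_le:
  fixes ga r :: real
  assumes ga: "1 \<le> ga" and r: "0 < r" "r \<le> 1"
  shows "(ga+1)*r - (ga-1) \<le> r powr ga * ((ga+1) - (ga-1)*r)"
proof -
  define A B where "A t = (ga+1) - (ga-1)*t" and "B t = (ga+1)*t - (ga-1)" for t :: real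
  have A_pos: "0 < A t" if "t \<le> 1" for t
  proof -
    have "(ga-1)*t \<le> (ga-1)*1" using that ga by (intro mult_left_mono) auto
    then show ?thesis by (simp add: A_def)
  qed
  show ?thesis
  proof (cases "B r \<le> 0")
    case True
    have "0 \<le> r powr ga * A r" using A_pos[OF r(2)] by simp
    with True show ?thesis by (simp add: A_def B_def)
  next
    case False
    have B_pos: "0 < B t" if "r \<le> t" for t
    proof -
      have "(ga+1)*r \<le> (ga+1)*t" using that ga by (intro mult_left_mono) auto
      with False show ?thesis by (simp add: B_def)
    qed
    define h where "h t = ga * ln t + ln (A t) - ln (B t)" for t
    have "h 1 \<le> h r"
    proof (rule DERIV_nonpos_imp_nonincreasing[of r 1 h])
      fix t assume t: "r \<le> t" "t \<le> 1"
      have t_pos: "0 < t" using t r by simp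
      have At: "0 < A t" and Bt: "0 < B t" using A_pos B_pos t by auto
      have "(h has_real_derivative ga / t - (ga-1) / A t - (ga+1) / B t) (at t)"
        unfolding h_def using t_pos At Bt
        by (auto intro!: derivative_eq_intros simp: A_def B_def field_simps)
      moreover have "ga / t - (ga-1) / A t - (ga+1) / B t
          = (ga * A t * B t - (ga-1) * t * B t - (ga+1) * t * A t) / (t * A t * B t)"
        using t_pos At Bt by (simp add: field_simps)
      moreover have "ga * A t * B t - (ga-1) * t * B t - (ga+1) * t * A t
          = - (ga * (ga*ga - 1) * (t-1)^2)"
        by (simp add: A_def B_def power2_eq_square algebra_simps)
      moreover have "0 \<le> ga * (ga*ga - 1) * (t-1)^2"
        using ga mult_mono[OF ga ga] by simp
      ultimately show "\<exists>y. (h has_real_derivative y) (at t) \<and> y \<le> 0"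
        using t_pos At Bt by (auto simp: divide_nonpos_pos)
    qed (use r in simp)
    then have "ln (B r) \<le> ln (r powr ga * A r)"
      using r A_pos[of r] by (simp add: h_def A_def B_def ln_mult)
    then show ?thesis
      using B_pos[of r] r A_pos[of r] by (simp add: A_def B_def)
  qed
qed

lemma Hugoniot_entropy_le:
  fixes ga p1 p2 x1 x2 :: real
  assumes ga: "1 \<le> ga" and p: "0 < p1" "0 < p2" and x: "0 < x2" "x2 < x1"
    and Hugoniot: "p2 * ((ga+1)*x2 - (ga-1)*x1) = p1 * ((ga+1)*x1 - (ga-1)*x2)"
  shows "p1 * x1 powr ga \<le> p2 * x2 powr ga"
proof -
  define r where "r = x2 / x1"
  have x1: "0 < x1" using x by simp
  have r: "0 < r" "r \<le> 1" using x by (auto simp: r_def)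
  have x2_eq: "x2 = r * x1" using x1 by (simp add: r_def)
  define A B where "A = (ga+1) - (ga-1)*r" and "B = (ga+1)*r - (ga-1)"
  have "x1 * (p2 * B) = x1 * (p1 * A)"
    using Hugoniot unfolding x2_eq A_def B_def by (simp add: algebra_simps)
  then have AB: "p2 * B = p1 * A" using x1 by simp
  have "(ga-1)*r \<le> (ga-1)*1" using r ga by (intro mult_left_mono) auto
  then have "0 < A" by (simp add: A_def)
  then have "0 < p2 * B" using AB p by simp
  then have B_pos: "0 < B" using p by (simp add: zero_less_mult_iff)
  have "p1 * B \<le> p1 * (r powr ga * A)"
    using Hugoniot_ratio_le[OF ga r] p by (simp add: A_def B_def)
  also have "\<dots> = r powr ga * p2 * B" using AB by simp
  finally have "p1 \<le> r powr ga * p2" using B_pos by simp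
  then have "p1 * x1 powr ga \<le> r powr ga * p2 * x1 powr ga" by (simp add: mult_right_mono)
  also have "\<dots> = p2 * x2 powr ga" unfolding x2_eq using r x1 by (simp add: powr_mult)
  finally show ?thesis .
qed

lemma Hugoniot_covolume:
  fixes b ga r1 r2 e1 e2 P1 P2 :: real
  assumes r: "0 < r1" "0 < r2"
    and P: "P1 * (1 - b*r1) = (ga-1)*e1" "P2 * (1 - b*r2) = (ga-1)*e2"
    and Hugoniot: "r1*e2 - r2*e1 + (P1 + P2)*(r1 - r2)/2 = 0"
  shows "P2*((ga+1)*(1/r2 - b) - (ga-1)*(1/r1 - b)) = P1*((ga+1)*(1/r1 - b) - (ga-1)*(1/r2 - b))"
proof -
  have "r1*r2*(P2*((ga+1)*(1/r2 - b) - (ga-1)*(1/r1 - b)))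
      = r1*r2*(P1*((ga+1)*(1/r1 - b) - (ga-1)*(1/r2 - b)))"
    using r by (simp add: field_simps) (use P Hugoniot in algebra)
  then show ?thesis using r by simp
qed

lemma Rankine_Hugoniot_shock_frame:
  fixes s r1 u1 e1 P1 r2 u2 e2 P2 :: real
  assumes mass: "s*(r2 - r1) = r2*u2 - r1*u1"
    and momentum: "s*(r2*u2 - r1*u1) = (r2*u2^2 + P2) - (r1*u1^2 + P1)"
    and energy: "s*((e2 + r2*u2^2/2) - (e1 + r1*u1^2/2))
                   = u2*(e2 + r2*u2^2/2 + P2) - u1*(e1 + r1*u1^2/2 + P1)"
  shows "r1*(u1 - s) = r2*(u2 - s)"
    and "r1*(u1 - s)^2 + P1 = r2*(u2 - s)^2 + P2"
    and "r1*(u1 - s) * (r1*e2 - r2*e1 + (P1 + P2)*(r1 - r2)/2) = 0"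
  using assms by algebra+

lemma Lax_shock_compressive:
  fixes b ga r1 r2 w1 w2 P1 P2 :: real
  assumes b: "0 \<le> b" and r: "0 < r1" "0 < r2" and y: "0 < 1 - b*r1" "0 < 1 - b*r2"
    and ga: "0 \<le> ga"
    and mass: "r1*w1 = r2*w2" and momentum: "r1*w1^2 + P1 = r2*w2^2 + P2"
    and w2: "0 < w2"
    and supersonic: "ga*P1 < r1*(1-b*r1)*w1^2" and subsonic: "r2*(1-b*r2)*w2^2 < ga*P2"
  shows "r1 < r2"
proof (rule ccontr)
  assume "\<not> r1 < r2"
  then have r21: "r2 \<le> r1" by simp
  define j where "j = r2*w2"
  have j: "0 < j" using r w2 by (simp add: j_def)
  have "0 \<le> r2*(1-b*r2)*w2^2" using r y by simp
  then have "0 < ga*P2" using subsonic by linarith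
  then have P2: "0 \<le> P2" using ga by (simp add: zero_less_mult_iff)
  have "w1 \<le> w2"
  proof -
    have "w1 = j / r1" "w2 = j / r2" using mass r by (simp_all add: j_def field_simps)
    moreover have "j / r1 \<le> j / r2" using r21 r j by (simp add: frac_le)
    ultimately show ?thesis by simp
  qed
  then have "j*w1 \<le> j*w2" using j by simp
  then have "r1*w1^2 \<le> r2*w2^2"
    using mass unfolding j_def by (simp add: power2_eq_square mult.assoc[symmetric])
  then have "P2 \<le> P1" using momentum by simp
  then have rP: "r2*P2 \<le> r1*P1" using r21 r P2 by (intro mult_mono) auto
  moreover have "0 \<le> r1*P1" using rP mult_nonneg_nonneg[OF less_imp_le[OF r(2)] P2] by linarith
  moreover have "1 - b*r1 \<le> 1 - b*r2" using r21 b by (simp add: mult_left_mono)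
  ultimately have "r2*P2 / (1 - b*r2) \<le> r1*P1 / (1 - b*r1)"
    using y by (intro frac_le) auto
  then have "ga * (r2*P2 / (1 - b*r2)) \<le> ga * (r1*P1 / (1 - b*r1))"
    using ga by (rule mult_left_mono)
  moreover have "ga * (r1*P1 / (1 - b*r1)) < j^2"
  proof -
    have "ga * (r1*P1) < (1 - b*r1) * (r1*w1)^2"
      using mult_strict_left_mono[OF supersonic r(1)] by (simp add: power2_eq_square ac_simps)
    then show ?thesis using y mass by (simp add: j_def pos_divide_less_eq ac_simps)
  qed
  moreover have "j^2 < ga * (r2*P2 / (1 - b*r2))"
  proof -
    have "(1 - b*r2) * (r2*w2)^2 < ga * (r2*P2)"
      using mult_strict_left_mono[OF subsonic r(2)] by (simp add: power2_eq_square ac_simps)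
    then show ?thesis using y by (simp add: j_def pos_less_divide_eq ac_simps)
  qed
  ultimately show False by simp
qed

lemma S_fun_covolume:
  assumes r: "0 < r" and y: "0 < 1 - b*r"
  shows "S_fun b r m E g = r * int_en r m E / (1 - b*r) * (1/r - b) powr g"
proof -
  have "1/r - b = (1 - b*r) / r" using r by (simp add: field_simps)
  then show ?thesis using r y by (simp add: S_fun_def powr_divide powr_diff)
qed

lemma S_fun_pressure:
  assumes r: "0 < r" and y: "0 < 1 - b*r"
    and P: "P * (1 - b*r) = (ga - 1) * (r * int_en r m E)"
  shows "(ga - 1) * S_fun b r m E ga = P * (1/r - b) powr ga"
proof -
  have "P = (ga - 1) * (r * int_en r m E) / (1 - b*r)" using P y by (simp add: eq_divide_eq)
  then show ?thesis by (simp add: S_fun_covolume[OF r y])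
qed

lemma S_fun_le_S_fun_smaller_exponent:
  fixes m1 m2 :: "'a::real_normed_vector"
  assumes b: "0 \<le> b" and r: "0 < r1" "r1 \<le> r2" and y: "0 < 1 - b*r2"
    and e: "0 \<le> int_en r1 m1 E1" and g: "g \<le> ga"
    and S: "S_fun b r1 m1 E1 ga \<le> S_fun b r2 m2 E2 ga"
  shows "S_fun b r1 m1 E1 g \<le> S_fun b r2 m2 E2 g"
proof -
  have "b*r1 \<le> b*r2" using r b by (simp add: mult_left_mono)
  then have y1: "0 < 1 - b*r1" using y by linarith
  have r2: "0 < r2" using r by simp
  define q1 q2
    where "q1 = r1 * int_en r1 m1 E1 / (1 - b*r1)" and "q2 = r2 * int_en r2 m2 E2 / (1 - b*r2)"
  define x1 x2 where "x1 = 1/r1 - b" and "x2 = 1/r2 - b"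
  have S_eq: "S_fun b r1 m1 E1 h = q1 * x1 powr h" "S_fun b r2 m2 E2 h = q2 * x2 powr h" for h
    using S_fun_covolume[OF r(1) y1] S_fun_covolume[OF r2 y]
    by (simp_all add: q1_def q2_def x1_def x2_def)
  have x2: "0 < x2" using y r by (simp add: x2_def field_simps)
  have x21: "x2 \<le> x1" using r by (simp add: x1_def x2_def frac_le)
  have "0 \<le> q1 * x1 powr ga" using e r y1 by (simp add: q1_def)
  then have "q1 * x1 powr ga * x1 powr (g - ga) \<le> q1 * x1 powr ga * x2 powr (g - ga)"
    using g x2 x21 by (intro mult_left_mono powr_mono2') auto
  also have "\<dots> \<le> q2 * x2 powr ga * x2 powr (g - ga)"
    using S unfolding S_eq by (intro mult_right_mono) auto
  finally show ?thesis
    using x2 x21 by (simp add: S_eq mult.assoc flip: powr_add)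
qed

lemma Psi_eq_S_fun:
  assumes r: "0 < r" and y: "0 < 1 - b*r"
  shows "Psi b Smin g r m E = r powr g * (1 - b*r) powr (1 - g) * (S_fun b r m E g - Smin)"
  using r y by (simp add: Psi_def S_fun_def powr_diff field_simps)

lemma Psi_le_Psi:
  fixes m1 m2 :: "'a::real_normed_vector"
  assumes b: "0 \<le> b" and g: "1 \<le> g" and r: "0 < r1" "r1 \<le> r2" and y: "0 < 1 - b*r2"
    and S: "Smin \<le> S_fun b r1 m1 E1 g" "S_fun b r1 m1 E1 g \<le> S_fun b r2 m2 E2 g"
  shows "Psi b Smin g r1 m1 E1 \<le> Psi b Smin g r2 m2 E2"
proof -
  have y21: "1 - b*r2 \<le> 1 - b*r1" using r b by (simp add: mult_left_mono)
  have y1: "0 < 1 - b*r1" using y y21 by simp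
  have Ph: "r1 powr g * (1 - b*r1) powr (1 - g) \<le> r2 powr g * (1 - b*r2) powr (1 - g)"
    using r y y21 g by (intro mult_mono powr_mono2 powr_mono2') auto
  have "r1 powr g * (1 - b*r1) powr (1 - g) * (S_fun b r1 m1 E1 g - Smin)
      \<le> r2 powr g * (1 - b*r2) powr (1 - g) * (S_fun b r2 m2 E2 g - Smin)"
    using mult_mono[OF Ph, of "S_fun b r1 m1 E1 g - Smin" "S_fun b r2 m2 E2 g - Smin"] S by simp
  then show ?thesis using r y y1 by (simp add: Psi_eq_S_fun)
qed

lemma int_en_real: "int_en r (m::real) E = E/r - (m/r)^2/2"
  by (simp add: int_en_def power_divide)

lemma mult_int_en_real:
  assumes "r \<noteq> 0"
  shows "r * int_en r (m::real) E = E - m^2/(2*r)"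
  using assms by (simp add: int_en_real field_simps power2_eq_square)

lemma RH_iff:
  "RH b s (r1,m1,E1,G1) (r2,m2,E2,G2) \<longleftrightarrow>
     s*(r2 - r1) = m2 - m1 \<and>
     s*(m2 - m1) = (m2^2/r2 + p_cov b (r2,m2,E2,G2)) - (m1^2/r1 + p_cov b (r1,m1,E1,G1)) \<and>
     s*(E2 - E1) = m2/r2*(E2 + p_cov b (r2,m2,E2,G2)) - m1/r1*(E1 + p_cov b (r1,m1,E1,G1)) \<and>
     s*(G2 - G1) = m2/r2*G2 - m1/r1*G1"
  by (simp add: RH_def ext_flux_def)

lemma lam1_eq: "lam1 b (r,m,E,G) = m/r - sqrt (G/r * p_cov b (r,m,E,G) / (r*(1 - b*r)))"
  by (simp add: lam1_def vel_def snd_speed_def)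

lemma lam3_eq: "lam3 b (r,m,E,G) = m/r + sqrt (G/r * p_cov b (r,m,E,G) / (r*(1 - b*r)))"
  by (simp add: lam3_def vel_def snd_speed_def)

lemma lax1_shock_frame:
  fixes b s r1 m1 E1 G1 r2 m2 E2 G2 :: real
  assumes r: "0 < r1" "0 < r2" and y: "0 < 1 - b*r1" "0 < 1 - b*r2"
    and lax: "lax1 b s (r1,m1,E1,G1) (r2,m2,E2,G2)"
  defines "w1 \<equiv> m1/r1 - s" and "w2 \<equiv> m2/r2 - s"
    and "P1 \<equiv> p_cov b (r1,m1,E1,G1)" and "P2 \<equiv> p_cov b (r2,m2,E2,G2)"
  shows "0 < w2" and "r1*w1 = r2*w2" and "r1*w1^2 + P1 = r2*w2^2 + P2"
    and "r1*(E2 - m2^2/(2*r2)) - r2*(E1 - m1^2/(2*r1)) + (P1 + P2)*(r1 - r2)/2 = 0"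
    and "G2/r2 = G1/r1"
    and "G1/r1 * P1 < r1*(1 - b*r1)*w1^2" and "r2*(1 - b*r2)*w2^2 < G2/r2 * P2"
proof -
  define u1 u2 where "u1 = m1/r1" and "u2 = m2/r2"
  define e1 e2 where "e1 = E1 - m1^2/(2*r1)" and "e2 = E2 - m2^2/(2*r2)"
  have m: "m1 = r1*u1" "m2 = r2*u2" and E: "E1 = e1 + r1*u1^2/2" "E2 = e2 + r2*u2^2/2"
    using r by (simp_all add: u1_def u2_def e1_def e2_def field_simps power2_eq_square)
  have w: "w1 = u1 - s" "w2 = u2 - s" by (simp_all add: w1_def w2_def u1_def u2_def)
  note RH_conds = lax[unfolded lax1_def RH_iff lam1_eq vel_def, folded P1_def P2_def]
  have mass: "s*(r2 - r1) = r2*u2 - r1*u1"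
    and momentum: "s*(r2*u2 - r1*u1) = (r2*u2^2 + P2) - (r1*u1^2 + P1)"
    and energy: "s*((e2 + r2*u2^2/2) - (e1 + r1*u1^2/2))
                   = u2*(e2 + r2*u2^2/2 + P2) - u1*(e1 + r1*u1^2/2 + P1)"
    and transport: "s*(G2 - G1) = u2*G2 - u1*G1"
    using RH_conds r unfolding m E by (simp_all add: power2_eq_square)
  show "0 < w2" using RH_conds by (simp add: w2_def)
  show mass': "r1*w1 = r2*w2" and "r1*w1^2 + P1 = r2*w2^2 + P2"
    using Rankine_Hugoniot_shock_frame[OF mass momentum energy] by (simp_all add: w)
  have "r1*w1 * (r1*e2 - r2*e1 + (P1 + P2)*(r1 - r2)/2) = 0"
    using Rankine_Hugoniot_shock_frame(3)[OF mass momentum energy] by (simp add: w)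
  moreover have j: "r1*w1 \<noteq> 0" using mass' r \<open>0 < w2\<close> by simp
  ultimately show "r1*(E2 - m2^2/(2*r2)) - r2*(E1 - m1^2/(2*r1)) + (P1 + P2)*(r1 - r2)/2 = 0"
    by (simp add: e1_def e2_def)
  have "r2*w2 * (G2/r2) = r1*w1 * (G1/r1)"
    using transport r by (simp add: w algebra_simps)
  then have "r1*w1 * (G2/r2) = r1*w1 * (G1/r1)" by (simp only: mass')
  then show "G2/r2 = G1/r1" using mult_left_cancel[OF j] by blast
  have "sqrt (G1/r1 * P1 / (r1*(1 - b*r1))) < w1"
    using RH_conds by (simp add: w1_def)
  also have "w1 \<le> sqrt (w1^2)" by simp
  finally have "G1/r1 * P1 / (r1*(1 - b*r1)) < w1^2" by (simp only: real_sqrt_less_iff)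
  then show "G1/r1 * P1 < r1*(1 - b*r1)*w1^2" using r y by (simp add: pos_divide_less_eq ac_simps)
  have "sqrt (w2^2) < sqrt (G2/r2 * P2 / (r2*(1 - b*r2)))"
    using RH_conds \<open>0 < w2\<close> by (simp add: w2_def)
  then have "w2^2 < G2/r2 * P2 / (r2*(1 - b*r2))" by (simp only: real_sqrt_less_iff)
  then show "r2*(1 - b*r2)*w2^2 < G2/r2 * P2" using r y by (simp add: pos_less_divide_eq ac_simps)
qed

lemma lax1_compressive_entropy_increase:
  fixes b s r1 m1 E1 G1 r2 m2 E2 G2 :: real
  assumes b: "0 \<le> b" and adm: "ext_adm b (r1,m1,E1,G1)" "ext_adm b (r2,m2,E2,G2)"
    and ga: "1 \<le> G1/r1" and lax: "lax1 b s (r1,m1,E1,G1) (r2,m2,E2,G2)"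
  shows "r1 < r2" and "S_fun b r1 m1 E1 (G1/r1) \<le> S_fun b r2 m2 E2 (G1/r1)"
proof -
  have r: "0 < r1" "0 < r2" and y: "0 < 1 - b*r1" "0 < 1 - b*r2"
    and ie: "0 < int_en r1 m1 E1" "0 < int_en r2 m2 E2"
    using adm by (auto simp: ext_adm_def admissible_def)
  define e1 e2 where "e1 = r1 * int_en r1 m1 E1" and "e2 = r2 * int_en r2 m2 E2"
  define P1 P2 where "P1 = p_cov b (r1,m1,E1,G1)" and "P2 = p_cov b (r2,m2,E2,G2)"
  note frame = lax1_shock_frame[OF r y lax, folded P1_def P2_def]
  have e: "0 < e1" "0 < e2" using r ie by (simp_all add: e1_def e2_def)
  have P: "P1 * (1 - b*r1) = (G1/r1 - 1)*e1" "P2 * (1 - b*r2) = (G1/r1 - 1)*e2"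
    using frame(5) r y by (simp_all add: P1_def P2_def p_cov_def e1_def e2_def mult_int_en_real)
  have ga_gt: "1 < G1/r1"
  proof (rule ccontr)
    assume "\<not> 1 < G1/r1"
    then have "P2 = 0" using ga P(2) y by simp
    moreover have "0 \<le> r2*(1 - b*r2)*(m2/r2 - s)^2" using r y by simp
    ultimately show False using frame(7) by simp
  qed
  have "0 < P1 * (1 - b*r1)" "0 < P2 * (1 - b*r2)" using P e ga_gt by simp_all
  then have P_pos: "0 < P1" "0 < P2" using y by (simp_all add: zero_less_mult_iff)
  show compressive: "r1 < r2"
    using Lax_shock_compressive[OF b r y _ frame(2,3,1), where ga = "G1/r1"] frame(5,6,7) ga by simp
  define x1 x2 where "x1 = 1/r1 - b" and "x2 = 1/r2 - b"
  have x: "0 < x2" "x2 < x1"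
    using r y compressive by (simp_all add: x1_def x2_def field_simps frac_less2)
  have "(G1/r1 - 1) * S_fun b r1 m1 E1 (G1/r1) = P1 * x1 powr (G1/r1)"
    and "(G1/r1 - 1) * S_fun b r2 m2 E2 (G1/r1) = P2 * x2 powr (G1/r1)"
    using S_fun_pressure r y P by (simp_all add: e1_def e2_def x1_def x2_def)
  moreover have "P1 * x1 powr (G1/r1) \<le> P2 * x2 powr (G1/r1)"
    using Hugoniot_entropy_le[OF ga P_pos x] Hugoniot_covolume[OF r P] frame(4) r
    by (simp add: x1_def x2_def e1_def e2_def mult_int_en_real)
  ultimately have
    "(G1/r1 - 1) * S_fun b r1 m1 E1 (G1/r1) \<le> (G1/r1 - 1) * S_fun b r2 m2 E2 (G1/r1)"
    by simp
  then show "S_fun b r1 m1 E1 (G1/r1) \<le> S_fun b r2 m2 E2 (G1/r1)"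
    using ga_gt by (simp add: mult_le_cancel_left_pos)
qed

lemma lax1_Psi_le:
  fixes b s g Smin r1 m1 E1 G1 r2 m2 E2 G2 :: real
  assumes b: "0 \<le> b" and adm: "ext_adm b (r1,m1,E1,G1)" "ext_adm b (r2,m2,E2,G2)"
    and g: "1 \<le> g" "g \<le> G1/r1" and Smin: "Smin \<le> S_fun b r1 m1 E1 g"
    and lax: "lax1 b s (r1,m1,E1,G1) (r2,m2,E2,G2)"
  shows "ext_Psi b Smin g (r1,m1,E1,G1) \<le> ext_Psi b Smin g (r2,m2,E2,G2)"
proof -
  have r: "0 < r1" and y: "0 < 1 - b*r2" and ie: "0 < int_en r1 m1 E1"
    using adm by (auto simp: ext_adm_def admissible_def)
  have ga: "1 \<le> G1/r1" using g by simp
  note shock = lax1_compressive_entropy_increase[OF b adm ga lax]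
  have "S_fun b r1 m1 E1 g \<le> S_fun b r2 m2 E2 g"
    using S_fun_le_S_fun_smaller_exponent
      [OF b r less_imp_le[OF shock(1)] y less_imp_le[OF ie] g(2) shock(2)] .
  then show ?thesis
    using Psi_le_Psi[OF b g(1) r less_imp_le[OF shock(1)] y Smin] by (simp add: ext_Psi_def)
qed

lemma int_en_uminus: "int_en r (- m) E = int_en r m E"
  by (simp add: int_en_def)

lemma p_cov_reflect: "p_cov b (r,-m,E,G) = p_cov b (r,m,E,G)"
  by (simp add: p_cov_def)

lemma lam1_reflect: "lam1 b (r,-m,E,G) = - lam3 b (r,m,E,G)"
  by (simp add: lam1_eq lam3_eq p_cov_reflect)

lemma RH_reflect:
  "RH b (- s) (r2,-m2,E2,G2) (r1,-m1,E1,G1) \<longleftrightarrow> RH b s (r1,m1,E1,G1) (r2,m2,E2,G2)"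
  by (auto simp: RH_iff p_cov_reflect algebra_simps)

lemma lax3_iff_lax1_reflect:
  "lax3 b s (r1,m1,E1,G1) (r2,m2,E2,G2) \<longleftrightarrow> lax1 b (- s) (r2,-m2,E2,G2) (r1,-m1,E1,G1)"
  by (auto simp: lax1_def lax3_def RH_reflect lam1_reflect vel_def)

lemma lax3_Psi_le:
  fixes b s g Smin r1 m1 E1 G1 r2 m2 E2 G2 :: real
  assumes b: "0 \<le> b" and adm: "ext_adm b (r1,m1,E1,G1)" "ext_adm b (r2,m2,E2,G2)"
    and g: "1 \<le> g" "g \<le> G2/r2" and Smin: "Smin \<le> S_fun b r2 m2 E2 g"
    and lax: "lax3 b s (r1,m1,E1,G1) (r2,m2,E2,G2)"
  shows "ext_Psi b Smin g (r2,m2,E2,G2) \<le> ext_Psi b Smin g (r1,m1,E1,G1)"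
proof -
  have "ext_Psi b Smin g (r2,-m2,E2,G2) \<le> ext_Psi b Smin g (r1,-m1,E1,G1)"
  proof (rule lax1_Psi_le[OF b _ _ g])
    show "ext_adm b (r2,-m2,E2,G2)" "ext_adm b (r1,-m1,E1,G1)"
      using adm by (simp_all add: ext_adm_def admissible_def int_en_uminus)
    show "Smin \<le> S_fun b r2 (-m2) E2 g" using Smin by (simp add: S_fun_def int_en_uminus)
    show "lax1 b (-s) (r2,-m2,E2,G2) (r1,-m1,E1,G1)" using lax by (simp add: lax3_iff_lax1_reflect)
  qed
  then show ?thesis by (simp add: ext_Psi_def Psi_def int_en_uminus)
qed

(* Also valid for c = 0, where unit_dir c = 0; so the case j = i, in which c i i may vanish,
   needs no special treatment. *)
lemma norm_diff_proj_unit_dir: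
  fixes M c :: "real^'d"
  shows "(norm (M - (M \<bullet> unit_dir c) *\<^sub>R unit_dir c))^2 = (norm M)^2 - (M \<bullet> unit_dir c)^2"
proof (cases "c = 0")
  case False
  define n where "n = unit_dir c"
  have "n \<bullet> n = 1" using False by (simp add: n_def unit_dir_def power2_norm_eq_inner[symmetric])
  then have "(M - (M \<bullet> n) *\<^sub>R n) \<bullet> (M - (M \<bullet> n) *\<^sub>R n) = M \<bullet> M - (M \<bullet> n)^2"
    by (simp add: inner_diff_left inner_diff_right inner_commute power2_eq_square)
  then show ?thesis by (simp add: n_def power2_norm_eq_inner)
qed (simp add: unit_dir_def)

lemma int_en_E_normal:
  fixes M c :: "real^'d"
  shows "int_en r (M \<bullet> unit_dir c) (E_normal (unit_dir c) r M E) = int_en r M E"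
proof (cases "r = 0")
  case False
  then show ?thesis
    unfolding int_en_real E_normal_def norm_diff_proj_unit_dir
    by (simp add: int_en_def power_divide power_mult_distrib field_simps) algebra
qed (simp add: int_en_def E_normal_def)

theorem lemma4p1:
  fixes b :: real
    and p :: "real \<Rightarrow> real^'d \<Rightarrow> real \<Rightarrow> real"
    and V :: "'v set" and I :: "'v \<Rightarrow> 'v set"
    and c :: "'v \<Rightarrow> 'v \<Rightarrow> real^'d"
    and rho :: "'v \<Rightarrow> real" and M :: "'v \<Rightarrow> real^'d" and E :: "'v \<Rightarrow> real"
    and i j :: 'v and g :: real
  assumes b_nonneg: "b \<ge> 0"
    and p_nonneg: "\<And>r m en. admissible b r m en \<Longrightarrow> p r m en \<ge> 0"
    and V_fin: "finite V"
    and I_sub: "\<And>k. k \<in> V \<Longrightarrow> I k \<subseteq> V \<and> k \<in> I k"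
    and c_nz: "\<And>k l. k \<in> V \<Longrightarrow> l \<in> I k \<Longrightarrow> l \<noteq> k \<Longrightarrow> c k l \<noteq> 0"
    and U_adm: "\<And>k. k \<in> V \<Longrightarrow> admissible b (rho k) (M k) (E k)"
    and i_in: "i \<in> V" and j_in: "j \<in> I i"
    and g_ge: "1 \<le> g"
    and g_le: "g \<le> min (gamma_of b (p (rho i) (M i) (E i)) (rho i) (M i) (E i))
                        (gamma_of b (p (rho j) (M j) (E j)) (rho j) (M j) (E j))"
  shows
    "let n = unit_dir (c i j);
         Smin = min (S_fun b (rho i) (M i) (E i) g) (S_fun b (rho j) (M j) (E j) g);
         UL = (rho i, M i \<bullet> n, E_normal n (rho i) (M i) (E i),
               rho i * gamma_of b (p (rho i) (M i) (E i)) (rho i) (M i) (E i));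
         UR = (rho j, M j \<bullet> n, E_normal n (rho j) (M j) (E j),
               rho j * gamma_of b (p (rho j) (M j) (E j)) (rho j) (M j) (E j))
     in (\<forall>s Ustar. ext_adm b Ustar \<and> lax1 b s UL Ustar
            \<longrightarrow> ext_Psi b Smin g UL \<le> ext_Psi b Smin g Ustar)
      \<and> (\<forall>s Ustar. ext_adm b Ustar \<and> lax3 b s Ustar UR
            \<longrightarrow> ext_Psi b Smin g UR \<le> ext_Psi b Smin g Ustar)"
proof -
  define n where "n = unit_dir (c i j)"
  define Smin where "Smin = min (S_fun b (rho i) (M i) (E i) g) (S_fun b (rho j) (M j) (E j) g)"
  define mn where "mn k = M k \<bullet> n" for k
  define En where "En k = E_normal n (rho k) (M k) (E k)" for k
  define G where "G k = rho k * gamma_of b (p (rho k) (M k) (E k)) (rho k) (M k) (E k)" for k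
  define U where "U k = (rho k, mn k, En k, G k)" for k
  have "j \<in> V" using I_sub[OF i_in] j_in by auto
  have data: "ext_adm b (rho k, mn k, En k, G k) \<and> g \<le> G k / rho k
      \<and> Smin \<le> S_fun b (rho k) (mn k) (En k) g" if "k \<in> {i, j}" for k
  proof -
    have adm: "admissible b (rho k) (M k) (E k)" using U_adm i_in \<open>j \<in> V\<close> that by auto
    then have "ext_adm b (rho k, mn k, En k, G k)"
      by (simp add: ext_adm_def admissible_def mn_def En_def n_def int_en_E_normal)
    moreover have "g \<le> G k / rho k"
      using adm g_le that by (auto simp: G_def admissible_def)
    moreover have "Smin \<le> S_fun b (rho k) (mn k) (En k) g"
      using that by (auto simp: Smin_def S_fun_def mn_def En_def n_def int_en_E_normal)
    ultimately show ?thesis by blast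
  qed
  have shock1: "ext_Psi b Smin g (U i) \<le> ext_Psi b Smin g Ustar"
    if "ext_adm b Ustar" "lax1 b s (U i) Ustar" for s Ustar
    using that lax1_Psi_le[OF b_nonneg _ _ g_ge] data[of i] by (cases Ustar) (auto simp: U_def)
  have shock3: "ext_Psi b Smin g (U j) \<le> ext_Psi b Smin g Ustar"
    if "ext_adm b Ustar" "lax3 b s Ustar (U j)" for s Ustar
    using that lax3_Psi_le[OF b_nonneg _ _ g_ge] data[of j] by (cases Ustar) (auto simp: U_def)
  show ?thesis
    unfolding Let_def n_def[symmetric] Smin_def[symmetric]
    using shock1 shock3 unfolding U_def mn_def En_def G_def by blast
qed

end
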